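(* Suppose $\|x_s\|_2\le L$ for all arms ever played and $\lambda>0$. Then at every communication round at time $t\le T$, for every client $i$ and every participant set $S$, the data incentive satisfies $$\mathcal I^d_{i,t}(S)\le \min\Big\{\big(1+\tfrac{L^2}{\lambda}\big)^{T},\ \big(1+\tfrac{TL^2}{\lambda d}\big)^{d}\Big\}.$$ Consequently, under the payment-free incentive mechanism, a client $i$ with $D_i^p>\min\{(1+L^2/\lambda)^T,(1+TL^2/(\lambda d))^d\}$ never participates in data sharing.
   Context: Federated linear bandit with $N$ clients and a server; at each time $t\le T$ one client plays an arm $x_t\in\mathbb R^d$ with $\|x_t\|_2\le L$. Client $i$ holds $V_{i,t}=\lambda I+\sum x_sx_s^\top$ over the data available to it; $\Delta V_{j,t}$ denotes client $j$'s local data (sum of $x_sx_s^\top$) not yet uploaded to the server, and $\Delta V_{-i,t}$ the data held by the server (uploaded by other clients) not yet sent to client $i$; all these sums are over distinct time steps $s\le t$, disjoint from those in $V_{i,t}$. For a participant set $S$, the data incentive is $\mathcal I^d_{i,t}(S)=\frac{\det(D_{i,t}(S)+V_{i,t})}{\det V_{i,t}}-1$ with $D_{i,t}(S)=\sum_{j\in S,\,j\ne i}\Delta V_{j,t}+\Delta V_{-i,t}$. Client $i$ participates only if its incentive is at least its data-sharing cost $D_i^p$. The payment-free mechanism offers only the data incentive: starting from all clients it repeatedly removes any client $i\in S$ with $\mathcal I^d_{i,t}(S)<D_i^p$ until stable. *)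

theory Defs
  imports "HOL-Analysis.Analysis"
begin

definition outer_prod :: "real^'d \<Rightarrow> real^'d \<Rightarrow> real^'d^'d" where
  "outer_prod u v = (\<chi> i j. u $ i * v $ j)"

definition gram :: "(nat \<Rightarrow> real^'d) \<Rightarrow> nat set \<Rightarrow> real^'d^'d" where
  "gram x A = (\<Sum>s\<in>A. outer_prod (x s) (x s))"

text \<open>Vs i t : time steps whose data client i holds at time t (V_{i,t} = lam I + gram);
  Us j t : time steps of client j's local data not yet uploaded (Delta V_{j,t});
  Ws i t : time steps held by the server not yet sent to client i (Delta V_{-i,t}).\<close>
definition data_incentive ::
  "real \<Rightarrow> (nat \<Rightarrow> real^'d) \<Rightarrow> (nat \<Rightarrow> nat \<Rightarrow> nat set) \<Rightarrow> (nat \<Rightarrow> nat \<Rightarrow> nat set)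
    \<Rightarrow> (nat \<Rightarrow> nat \<Rightarrow> nat set) \<Rightarrow> nat \<Rightarrow> nat \<Rightarrow> nat set \<Rightarrow> real" where
  "data_incentive lam x Vs Us Ws t i S =
     (let V = lam *\<^sub>R mat 1 + gram x (Vs i t);
          D = (\<Sum>j\<in>S - {i}. gram x (Us j t)) + gram x (Ws i t)
      in det (D + V) / det V - 1)"

definition pf_step :: "(nat \<Rightarrow> nat set \<Rightarrow> real) \<Rightarrow> (nat \<Rightarrow> real) \<Rightarrow> nat set \<Rightarrow> nat set \<Rightarrow> bool" where
  "pf_step inc cost S S' \<longleftrightarrow> (\<exists>i\<in>S. inc i S < cost i \<and> S' = S - {i})"

definition pf_outcome :: "(nat \<Rightarrow> nat set \<Rightarrow> real) \<Rightarrow> (nat \<Rightarrow> real) \<Rightarrow> nat set \<Rightarrow> nat set \<Rightarrow> bool" where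
  "pf_outcome inc cost C S \<longleftrightarrow> (pf_step inc cost)\<^sup>*\<^sup>* C S \<and> \<not> (\<exists>S'. pf_step inc cost S S')"

end

theory Submission
  imports Defs
begin

text \<open>
  Up to the \<open>-1\<close>, the data incentive is \<open>det (V + D) / det V\<close> for the regularized Gram
  matrix \<open>V = lam I + \<Sum> x x\<^sup>T\<close>, where \<open>V + D\<close> arises from \<open>V\<close> by adding at most \<open>T\<close>
  rank-one terms \<open>z z\<^sup>T\<close> with \<open>\<parallel>z\<parallel> \<le> L\<close>. By the matrix determinant lemma each such term
  multiplies the determinant by \<open>1 + z\<^sup>T M\<^sup>-\<^sup>1 z \<le> 1 + L\<^sup>2/lam\<close>, as \<open>M \<succeq> lam I\<close>; this gives
  the first bound. For the second, \<open>det V \<ge> lam\<^sup>d\<close>, while Hadamard's inequality and AM-GM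
  bound \<open>det (V + D)\<close> by \<open>(trace / d)\<^sup>d \<le> (lam + T L\<^sup>2 / d)\<^sup>d\<close>. A client whose cost exceeds
  the bound falls short of its cost for every participant set, so the removal process
  would still delete it from any set containing it; hence it is in no stable outcome.
\<close>

definition shear :: "'n::finite \<Rightarrow> real^'n \<Rightarrow> real^'n^'n" where
  "shear j w = mat 1 + outer_prod w (axis j 1)"

lemma matrix_mult_outer_prod: "M ** outer_prod u w = outer_prod (M *v u) w"
  unfolding outer_prod_def matrix_matrix_mult_def matrix_vector_mult_def
  by (simp add: vec_eq_iff sum_distrib_right mult.assoc)

lemma outer_prod_mult_vector: "outer_prod u w *v v = (w \<bullet> v) *s u"
  unfolding outer_prod_def matrix_vector_mult_def inner_vec_def
  by (simp add: vec_eq_iff sum_distrib_left algebra_simps)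

lemma shear_mult: "shear j w ** M = M + outer_prod w (row j M)"
proof -
  have "(shear j w ** M) $ i $ l
      = (\<Sum>k\<in>UNIV. (if k = i then M$k$l else 0) + (if k = j then w$i * M$k$l else 0))" for i l
    unfolding shear_def outer_prod_def matrix_matrix_mult_def mat_def axis_def
    by (auto intro!: sum.cong simp: algebra_simps)
  then show ?thesis
    by (simp add: vec_eq_iff sum.distrib outer_prod_def row_def)
qed

lemma det_shear:
  fixes w :: "real^'n"
  assumes "w $ j = 0"
  shows "det (shear j w) = 1"
proof -
  have "w \<in> vec.span {row l (mat 1 :: real^'n^'n) |l. l \<noteq> j}"
  proof -
    have "w = (\<Sum>l\<in>UNIV - {j}. w $ l *s row l (mat 1))"
      using assms by (auto simp: vec_eq_iff sum_component row_def mat_def if_distrib cong: if_cong)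
    also have "\<dots> \<in> vec.span {row l (mat 1 :: real^'n^'n) |l. l \<noteq> j}"
      by (intro vec.span_sum vec.span_scale vec.span_base) blast
    finally show ?thesis .
  qed
  then have "det (\<chi> k. if k = j then row j (mat 1) + w else row k (mat 1 :: real^'n^'n)) = 1"
    by (simp add: det_row_span)
  moreover have "transpose (shear j w) = (\<chi> k. if k = j then row j (mat 1) + w else row k (mat 1))"
    by (simp add: shear_def outer_prod_def transpose_def row_def mat_def axis_def vec_eq_iff)
  ultimately show ?thesis
    by (metis det_transpose)
qed

lemma det_replace_row_of_mat_1:
  fixes v :: "real^'n"
  shows "det (\<chi> k. if k = j then v else axis k 1 :: real^'n^'n) = v $ j"
proof -
  define D :: "real^'n^'n" where "D = (\<chi> k l. if k = l then (if k = j then v $ j else 1) else 0)"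
  have "v - v $ j *s axis j 1 \<in> vec.span {row l D |l. l \<noteq> j}"
  proof -
    have "v - v $ j *s axis j 1 = (\<Sum>l\<in>UNIV - {j}. v $ l *s row l D)"
      by (auto simp: vec_eq_iff sum_component row_def D_def axis_def if_distrib cong: if_cong)
    also have "\<dots> \<in> vec.span {row l D |l. l \<noteq> j}"
      by (intro vec.span_sum vec.span_scale vec.span_base) blast
    finally show ?thesis .
  qed
  then have "det (\<chi> k. if k = j then row j D + (v - v $ j *s axis j 1) else row k D) = det D"
    by (rule det_row_span)
  moreover have "(\<chi> k. if k = j then row j D + (v - v $ j *s axis j 1) else row k D)
      = (\<chi> k. if k = j then v else axis k 1 :: real^'n^'n)"
    by (auto simp: vec_eq_iff row_def D_def axis_def)
  moreover have "det D = v $ j"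
    by (subst det_diagonal) (auto simp: D_def prod.If_cases)
  ultimately show ?thesis by simp
qed

text \<open>Splitting row \<open>j\<close> by linearity leaves the matrix
  whose row \<open>j\<close> is \<open>x\<close>; it is a shear of the identity with row \<open>j\<close> replaced by \<open>x\<close>,
  so its determinant is \<open>x $ j\<close>.\<close>
lemma det_mat_1_plus_outer_prod: "det (mat 1 + outer_prod y x) = 1 + x \<bullet> (y :: real^'n)"
proof -
  have "\<forall>y :: real^'n. (\<forall>k. k \<notin> P \<longrightarrow> y $ k = 0) \<longrightarrow>
      det (mat 1 + outer_prod y x) = 1 + x \<bullet> y"
    if "finite P" for P :: "'n set"
    using that
  proof (induction P rule: finite_induct)
    case empty
    have "outer_prod 0 x = 0"
      by (simp add: vec_eq_iff outer_prod_def)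
    moreover have "(\<forall>k. y $ k = 0) \<longleftrightarrow> y = 0" for y :: "real^'n"
      by (simp add: vec_eq_iff)
    ultimately show ?case
      by simp
  next
    case (insert j P)
    show ?case
    proof (intro allI impI)
      fix y :: "real^'n"
      assume supp: "\<forall>k. k \<notin> insert j P \<longrightarrow> y $ k = 0"
      define y' where "y' = y - y $ j *s axis j 1"
      define N where "N = mat 1 + outer_prod y' x"
      have y'j: "y' $ j = 0"
        by (simp add: y'_def axis_def)
      have "det N = 1 + x \<bullet> y'"
        using insert.IH supp by (auto simp: N_def y'_def axis_def)
      have split_row_j:
        "mat 1 + outer_prod y x = (\<chi> k. if k = j then row j N + y $ j *s x else row k N)"
        by (auto simp: vec_eq_iff N_def y'_def outer_prod_def row_def mat_def axis_def)
      have "(\<chi> k. if k = j then x else row k N)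
          = shear j y' ** (\<chi> k. if k = j then x else axis k 1)"
        by (auto simp: shear_mult vec_eq_iff N_def outer_prod_def row_def mat_def axis_def y'j)
      then have "det (\<chi> k. if k = j then x else row k N) = x $ j"
        by (simp add: det_mul det_shear[OF y'j] det_replace_row_of_mat_1)
      moreover have "(\<chi> k. if k = j then row j N else row k N) = N"
        by (simp add: vec_eq_iff row_def)
      ultimately have "det (mat 1 + outer_prod y x) = det N + y $ j * x $ j"
        unfolding split_row_j det_row_add det_row_mul by simp
      also have "\<dots> = 1 + x \<bullet> y"
        using \<open>det N = 1 + x \<bullet> y'\<close>
        by (simp add: y'_def inner_diff_right scalar_mult_eq_scaleR inner_axis)
      finally show "det (mat 1 + outer_prod y x) = 1 + x \<bullet> y" .
    qed
  qed
  from this[of UNIV] show ?thesis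
    by simp
qed

definition reg_gram :: "real \<Rightarrow> (nat \<Rightarrow> real^'d) \<Rightarrow> nat set \<Rightarrow> real^'d^'d" where
  "reg_gram lam x A = lam *\<^sub>R mat 1 + gram x A"

lemma gram_mult_vector: "finite A \<Longrightarrow> gram x A *v v = (\<Sum>s\<in>A. (x s \<bullet> v) *s x s)"
  by (induction A rule: finite_induct)
    (simp_all add: gram_def matrix_vector_mult_add_rdistrib outer_prod_mult_vector)

lemma inner_reg_gram:
  assumes "finite A"
  shows "v \<bullet> (reg_gram lam x A *v v) = lam * (v \<bullet> v) + (\<Sum>s\<in>A. (x s \<bullet> v)\<^sup>2)"
proof -
  have "reg_gram lam x A *v v = lam *\<^sub>R v + (\<Sum>s\<in>A. (x s \<bullet> v) *s x s)"
    by (simp add: reg_gram_def matrix_vector_mult_add_rdistrib scaleR_matrix_vector_assoc[symmetric]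
        gram_mult_vector[OF assms])
  then show ?thesis
    by (simp add: inner_add_right inner_sum_right power2_eq_square inner_commute scalar_mult_eq_scaleR)
qed

lemma inner_reg_gram_ge: "finite A \<Longrightarrow> lam * (v \<bullet> v) \<le> v \<bullet> (reg_gram lam x A *v v)"
  by (simp add: inner_reg_gram sum_nonneg)

lemma reg_gram_insert:
  "finite A \<Longrightarrow> a \<notin> A \<Longrightarrow> reg_gram lam x (insert a A) = reg_gram lam x A + outer_prod (x a) (x a)"
  by (simp add: reg_gram_def gram_def algebra_simps)

lemma det_add_outer_prod:
  assumes "M *v y = z"
  shows "det (M + outer_prod z z) = det M * (1 + z \<bullet> (y :: real^'n))"
proof -
  have "M + outer_prod z z = M ** (mat 1 + outer_prod y z)"
    by (simp add: matrix_add_ldistrib matrix_mult_outer_prod assms)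
  then show ?thesis
    by (simp add: det_mul det_mat_1_plus_outer_prod)
qed

text \<open>If \<open>M \<succeq> lam I\<close>, then \<open>y = M\<^sup>-\<^sup>1 z\<close> satisfies
  \<open>lam \<parallel>y\<parallel>\<^sup>2 \<le> y \<bullet> M y = z \<bullet> y \<le> \<parallel>z\<parallel> \<parallel>y\<parallel>\<close>, whence \<open>0 \<le> z \<bullet> y \<le> \<parallel>z\<parallel>\<^sup>2 / lam\<close>.\<close>
lemma det_add_outer_prod_bounds:
  fixes M :: "real^'n^'n"
  assumes lam: "lam > 0" and det_pos: "det M > 0"
    and coercive: "\<And>v. lam * (v \<bullet> v) \<le> v \<bullet> (M *v v)"
  shows "det M \<le> det (M + outer_prod z z)"
    and "det (M + outer_prod z z) \<le> det M * (1 + (norm z)\<^sup>2 / lam)"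
proof -
  obtain M' where "M ** M' = mat 1"
    using det_pos by (metis invertible_det_nz invertible_def less_irrefl)
  define y where "y = M' *v z"
  have "M *v y = z"
    by (simp add: y_def matrix_vector_mul_assoc \<open>M ** M' = mat 1\<close>)
  then have lower: "lam * (norm y)\<^sup>2 \<le> z \<bullet> y"
    using coercive[of y] by (simp add: power2_norm_eq_inner inner_commute)
  have upper: "z \<bullet> y \<le> norm z * norm y"
    using norm_cauchy_schwarz by blast
  have "z \<bullet> y \<le> (norm z)\<^sup>2 / lam"
  proof (cases "y = 0")
    case False
    then have "lam * norm y \<le> norm z"
      using order_trans[OF lower upper] by (simp add: power2_eq_square)
    then have "norm z * norm y \<le> norm z * (norm z / lam)"
      using lam by (intro mult_left_mono) (simp_all add: field_simps)
    then show ?thesis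
      using upper by (simp add: power2_eq_square)
  qed (use lam in simp)
  moreover have "0 \<le> z \<bullet> y"
    using lower lam by (smt (verit) zero_le_power2 mult_nonneg_nonneg)
  ultimately show "det M \<le> det (M + outer_prod z z)"
    and "det (M + outer_prod z z) \<le> det M * (1 + (norm z)\<^sup>2 / lam)"
    using det_pos by (simp_all add: det_add_outer_prod[OF \<open>M *v y = z\<close>] mult_left_mono)
qed

lemma det_reg_gram_ge:
  assumes "finite A" "lam > 0"
  shows "lam ^ CARD('d) \<le> det (reg_gram lam x A :: real^'d^'d)"
  using assms(1)
proof (induction A rule: finite_induct)
  case empty
  have "det (lam *\<^sub>R mat 1 :: real^'d^'d) = lam ^ CARD('d)"
    by (simp add: det_diagonal mat_def)
  then show ?case
    by (simp add: reg_gram_def gram_def)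
next
  case (insert a A)
  have "0 < det (reg_gram lam x A :: real^'d^'d)"
    using insert.IH assms(2) by (smt (verit) zero_less_power)
  then have "det (reg_gram lam x A) \<le> det (reg_gram lam x A + outer_prod (x a) (x a))"
    by (rule det_add_outer_prod_bounds(1)[OF assms(2) _ inner_reg_gram_ge[OF insert.hyps(1)]])
  then show ?case
    using insert.IH by (simp add: reg_gram_insert[OF insert.hyps])
qed

lemma det_reg_gram_union_le:
  fixes x :: "nat \<Rightarrow> real^'d"
  assumes lam: "lam > 0" and "finite B" "finite A" "A \<inter> B = {}"
    and bound: "\<forall>s\<in>A. norm (x s) \<le> L"
  shows "det (reg_gram lam x (B \<union> A)) \<le> det (reg_gram lam x B) * (1 + L\<^sup>2 / lam) ^ card A"
  using assms(3-5)
proof (induction A rule: finite_induct)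
  case (insert a A)
  let ?M = "reg_gram lam x (B \<union> A)"
  have fin: "finite (B \<union> A)" and new: "a \<notin> B \<union> A"
    using \<open>finite B\<close> insert by auto
  have pos: "0 < det ?M"
    using det_reg_gram_ge[OF fin lam, of x] lam by (smt (verit) zero_less_power)
  have "(norm (x a))\<^sup>2 \<le> L\<^sup>2"
    using insert.prems by (auto intro: power_mono)
  then have "det (?M + outer_prod (x a) (x a)) \<le> det ?M * (1 + L\<^sup>2 / lam)"
    using det_add_outer_prod_bounds(2)[OF lam pos inner_reg_gram_ge[OF fin]] pos lam
    by (smt (verit) divide_right_mono mult_left_mono)
  also have "\<dots> \<le> det (reg_gram lam x B) * (1 + L\<^sup>2 / lam) ^ card A * (1 + L\<^sup>2 / lam)"
    using insert lam by (intro mult_right_mono) auto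
  finally show ?case
    using insert.hyps reg_gram_insert[OF fin new, of lam x] by (simp add: ac_simps)
qed simp

definition pos_def_matrix :: "real^'n^'n \<Rightarrow> bool" where
  "pos_def_matrix B \<longleftrightarrow> (\<forall>v. v \<noteq> 0 \<longrightarrow> 0 < v \<bullet> (B *v v))"

definition symmetric_matrix :: "real^'n^'n \<Rightarrow> bool" where
  "symmetric_matrix B \<longleftrightarrow> transpose B = B"

lemma pos_def_matrix_diag_pos:
  assumes "pos_def_matrix B"
  shows "0 < B $ i $ i"
proof -
  have "0 < axis i 1 \<bullet> (B *v axis i 1)"
    using assms by (simp add: pos_def_matrix_def axis_eq_0_iff)
  then show ?thesis
    by (simp add: matrix_vector_mult_basis inner_axis' column_def)
qed

lemma pos_def_matrix_congruence:
  fixes P B :: "real^'n^'n"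
  assumes "invertible P" "pos_def_matrix B"
  shows "pos_def_matrix (P ** B ** transpose P)"
  unfolding pos_def_matrix_def
proof (intro allI impI)
  fix v :: "real^'n"
  assume "v \<noteq> 0"
  have "invertible (transpose P)"
    using assms(1) by (simp add: invertible_det_nz)
  then have "transpose P *v v \<noteq> 0"
    using \<open>v \<noteq> 0\<close> inj_matrix_vector_mult[of "transpose P"] by (metis injD matrix_vector_mult_0_right)
  then have "0 < (transpose P *v v) \<bullet> (B *v (transpose P *v v))"
    using assms(2) by (simp add: pos_def_matrix_def)
  also have "\<dots> = v \<bullet> ((P ** B ** transpose P) *v v)"
    by (simp add: dot_lmul_matrix matrix_vector_mul_assoc[symmetric])
  finally show "0 < v \<bullet> ((P ** B ** transpose P) *v v)" .
qed

lemma symmetric_matrix_congruence: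
  fixes P B :: "real^'n^'n"
  shows "symmetric_matrix B \<Longrightarrow> symmetric_matrix (P ** B ** transpose P)"
  by (simp add: symmetric_matrix_def matrix_transpose_mul matrix_mul_assoc)

lemma shear_congruence_entry:
  fixes B :: "real^'n^'n"
  shows "(shear j w ** B ** transpose (shear j w)) $ k $ m
     = B$k$m + w$k * B$j$m + w$m * B$k$j + w$k * w$m * B$j$j"
proof -
  have "C ** transpose (shear j w) = transpose (shear j w ** transpose C)" for C :: "real^'n^'n"
    by (simp add: matrix_transpose_mul)
  then have "(C ** transpose (shear j w)) $ k $ m = C$k$m + w$m * C$k$j" for C :: "real^'n^'n" and k m
    unfolding shear_mult by (simp add: transpose_def outer_prod_def row_def)
  then show ?thesis
    by (simp add: shear_mult matrix_add_ldistrib[symmetric] matrix_mul_assoc[symmetric]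
        outer_prod_def row_def algebra_simps)
qed

lemma symmetric_matrix_entry: "symmetric_matrix B \<Longrightarrow> B $ m $ k = B $ k $ m"
  unfolding symmetric_matrix_def by (auto simp: vec_eq_iff transpose_def)

text \<open>One step of symmetric Gaussian elimination: the shear clears the off-diagonal
  entries of row and column \<open>i\<close>, leaving the Schur complement on the other indices.\<close>
definition sym_elim :: "'n \<Rightarrow> real^'n^'n \<Rightarrow> real^'n^'n" where
  "sym_elim i B =
    (let E = shear i (\<chi> k. if k = i then 0 else - (B$k$i / B$i$i)) in E ** B ** transpose E)"

lemma sym_elim_entry:
  assumes "symmetric_matrix B" "B $ i $ i \<noteq> 0"
  shows "sym_elim i B $ k $ m =
    (if k = i \<or> m = i then (if k = m then B$k$m else 0) else B$k$m - B$k$i * B$i$m / B$i$i)"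
proof -
  have "B $ k $ i = B $ i $ k" "B $ m $ i = B $ i $ m"
    using symmetric_matrix_entry[OF assms(1)] by blast+
  then show ?thesis
    using assms(2)
    by (cases "k = i"; cases "m = i")
      (simp_all add: sym_elim_def Let_def shear_congruence_entry field_simps power2_eq_square)
qed

lemma det_sym_elim: "det (sym_elim i B) = det B"
  by (simp add: sym_elim_def Let_def det_mul det_shear)

lemma pos_def_matrix_sym_elim: "pos_def_matrix B \<Longrightarrow> pos_def_matrix (sym_elim i B)"
  unfolding sym_elim_def Let_def
  by (rule pos_def_matrix_congruence) (simp_all add: invertible_det_nz det_shear)

lemma symmetric_matrix_sym_elim: "symmetric_matrix B \<Longrightarrow> symmetric_matrix (sym_elim i B)"
  unfolding sym_elim_def Let_def by (rule symmetric_matrix_congruence)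

text \<open>Induction on the set \<open>P\<close> of rows that are not yet diagonal: eliminating row \<open>i\<close>
  keeps the determinant, clears row \<open>i\<close>, keeps diagonal rows diagonal and can only
  decrease the (positive) diagonal entries.\<close>
lemma hadamard_inequality:
  fixes A :: "real^'n^'n"
  assumes "pos_def_matrix A" "symmetric_matrix A"
  shows "det A \<le> (\<Prod>k\<in>UNIV. A $ k $ k)"
proof -
  have "det B \<le> (\<Prod>k\<in>UNIV. B $ k $ k)"
    if "finite P" "pos_def_matrix B" "symmetric_matrix B"
      "\<forall>p m. p \<notin> P \<longrightarrow> m \<noteq> p \<longrightarrow> B $ p $ m = 0"
    for P and B :: "real^'n^'n"
    using that
  proof (induction P arbitrary: B rule: finite_induct)
    case empty
    then show ?case
      by (auto simp: det_diagonal)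
  next
    case (insert i P)
    note pd = insert.prems(1) and sym = insert.prems(2) and diag = insert.prems(3)
    have Bii: "0 < B $ i $ i"
      using pd by (rule pos_def_matrix_diag_pos)
    let ?B' = "sym_elim i B"
    have entry: "?B' $ k $ m =
        (if k = i \<or> m = i then (if k = m then B$k$m else 0) else B$k$m - B$k$i * B$i$m / B$i$i)" for k m
      using sym Bii by (simp add: sym_elim_entry)
    have "\<forall>p m. p \<notin> P \<longrightarrow> m \<noteq> p \<longrightarrow> ?B' $ p $ m = 0"
      using diag by (auto simp: entry)
    then have "det ?B' \<le> (\<Prod>k\<in>UNIV. ?B' $ k $ k)"
      using insert.IH pd sym pos_def_matrix_sym_elim symmetric_matrix_sym_elim by blast
    also have "\<dots> \<le> (\<Prod>k\<in>UNIV. B $ k $ k)"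
    proof (rule prod_mono, rule conjI)
      fix k
      show "0 \<le> ?B' $ k $ k"
        using pos_def_matrix_diag_pos[OF pos_def_matrix_sym_elim[OF pd]] less_imp_le by blast
      have "0 \<le> B$k$i * B$i$k / B$i$i"
        using Bii symmetric_matrix_entry[OF sym, of i k] by simp
      then show "?B' $ k $ k \<le> B $ k $ k"
        by (simp add: entry)
    qed
    finally show ?case
      by (simp add: det_sym_elim)
  qed
  from this[of UNIV] show ?thesis
    using assms by simp
qed

lemma prod_le_mean_power:
  fixes a :: "'a \<Rightarrow> real"
  assumes "finite S" "S \<noteq> {}" "\<And>k. k \<in> S \<Longrightarrow> 0 \<le> a k"
  shows "(\<Prod>k\<in>S. a k) \<le> ((\<Sum>k\<in>S. a k) / card S) ^ card S"
proof (cases "(\<Prod>k\<in>S. a k) = 0")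
  case True
  then show ?thesis
    using assms(3) by (simp add: sum_nonneg)
next
  case False
  then have pos: "0 < (\<Prod>k\<in>S. a k)"
    using assms(3) by (simp add: less_le prod_nonneg)
  have "(\<Prod>k\<in>S. a k) powr (1 / card S) \<le> (\<Sum>k\<in>S. a k) / card S"
    using arith_geom_mean[OF assms] by (simp add: sum_divide_distrib)
  then have "((\<Prod>k\<in>S. a k) powr (1 / card S)) ^ card S \<le> ((\<Sum>k\<in>S. a k) / card S) ^ card S"
    by (rule power_mono) simp
  also have "((\<Prod>k\<in>S. a k) powr (1 / card S)) ^ card S = (\<Prod>k\<in>S. a k) powr (1 / card S * card S)"
    using pos by (simp add: powr_realpow[symmetric] powr_powr)
  also have "\<dots> = (\<Prod>k\<in>S. a k)"
    using pos assms(1,2) by simp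
  finally show ?thesis .
qed

lemma reg_gram_entry:
  "reg_gram lam x C $ k $ m = (if k = m then lam else 0) + (\<Sum>s\<in>C. x s $ k * x s $ m)"
  by (simp add: reg_gram_def gram_def outer_prod_def mat_def sum_component)

lemma pos_def_matrix_reg_gram: "finite C \<Longrightarrow> lam > 0 \<Longrightarrow> pos_def_matrix (reg_gram lam x C)"
  unfolding pos_def_matrix_def
  by (metis inner_reg_gram_ge inner_gt_zero_iff order_less_le_trans zero_less_mult_iff)

lemma symmetric_matrix_reg_gram: "symmetric_matrix (reg_gram lam x C)"
  by (simp add: symmetric_matrix_def vec_eq_iff transpose_def reg_gram_entry mult.commute)

lemma trace_reg_gram:
  "(\<Sum>k\<in>UNIV. reg_gram lam x C $ k $ k) = real CARD('d) * lam + (\<Sum>s\<in>C. (norm (x s :: real^'d))\<^sup>2)"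
  by (simp add: reg_gram_entry sum.distrib sum.swap[of _ C] power2_norm_eq_inner inner_vec_def)

lemma det_reg_gram_le:
  fixes x :: "nat \<Rightarrow> real^'d"
  assumes "finite C" "lam > 0"
  shows "det (reg_gram lam x C) \<le> (lam + (\<Sum>s\<in>C. (norm (x s))\<^sup>2) / CARD('d)) ^ CARD('d)"
proof -
  have "det (reg_gram lam x C) \<le> (\<Prod>k\<in>UNIV. reg_gram lam x C $ k $ k)"
    using assms by (simp add: hadamard_inequality pos_def_matrix_reg_gram symmetric_matrix_reg_gram)
  also have "\<dots> \<le> ((\<Sum>k\<in>UNIV. reg_gram lam x C $ k $ k) / CARD('d)) ^ CARD('d)"
    using pos_def_matrix_diag_pos[OF pos_def_matrix_reg_gram[OF assms, where x = x]]
    by (intro prod_le_mean_power) (simp_all add: less_imp_le)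
  also have "(\<Sum>k\<in>UNIV. reg_gram lam x C $ k $ k) / CARD('d)
      = lam + (\<Sum>s\<in>C. (norm (x s))\<^sup>2) / CARD('d)"
    unfolding trace_reg_gram by (simp add: field_simps)
  finally show ?thesis .
qed

lemma det_reg_gram_ratio_le_pow_card:
  fixes x :: "nat \<Rightarrow> real^'d"
  assumes lam: "lam > 0" and "finite B" "finite A" "A \<inter> B = {}"
    and bound: "\<forall>s\<in>A. norm (x s) \<le> L" and card: "card A \<le> T"
  shows "det (reg_gram lam x (B \<union> A)) / det (reg_gram lam x B) \<le> (1 + L\<^sup>2 / lam) ^ T"
proof -
  have pos: "0 < det (reg_gram lam x B)"
    using det_reg_gram_ge[OF \<open>finite B\<close> lam, of x] lam by (smt (verit) zero_less_power)
  have "det (reg_gram lam x (B \<union> A)) \<le> det (reg_gram lam x B) * (1 + L\<^sup>2 / lam) ^ card A"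
    using det_reg_gram_union_le[OF assms(1-5)] .
  also have "\<dots> \<le> det (reg_gram lam x B) * (1 + L\<^sup>2 / lam) ^ T"
    using pos lam card by (intro mult_left_mono power_increasing) auto
  finally show ?thesis
    using pos by (simp add: divide_le_eq mult.commute)
qed

lemma det_reg_gram_ratio_le_trace_pow:
  fixes x :: "nat \<Rightarrow> real^'d"
  assumes lam: "lam > 0" and "finite B" "finite A"
    and bound: "\<forall>s\<in>B \<union> A. norm (x s) \<le> L" and card: "card (B \<union> A) \<le> T"
  shows "det (reg_gram lam x (B \<union> A)) / det (reg_gram lam x B)
    \<le> (1 + real T * L\<^sup>2 / (lam * real CARD('d))) ^ CARD('d)"
proof -
  let ?d = "real CARD('d)" and ?S = "\<Sum>s\<in>B \<union> A. (norm (x s))\<^sup>2"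
  have fin: "finite (B \<union> A)"
    using assms by simp
  have "?S \<le> real (card (B \<union> A)) * L\<^sup>2"
    using sum_bounded_above[of "B \<union> A" "\<lambda>s. (norm (x s))\<^sup>2" "L\<^sup>2"] bound
    by (simp add: power_mono)
  also have "\<dots> \<le> real T * L\<^sup>2"
    using card by (simp add: mult_right_mono)
  finally have S_le: "?S \<le> real T * L\<^sup>2" .
  have lam_pow: "0 < lam ^ CARD('d)"
    using lam by simp
  have "det (reg_gram lam x (B \<union> A)) / det (reg_gram lam x B)
      \<le> det (reg_gram lam x (B \<union> A)) / lam ^ CARD('d)"
    using det_reg_gram_ge[OF \<open>finite B\<close> lam, of x] det_reg_gram_ge[OF fin lam, of x] lam_pow
    by (intro divide_left_mono) auto
  also have "\<dots> \<le> (lam + ?S / ?d) ^ CARD('d) / lam ^ CARD('d)"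
    using det_reg_gram_le[OF fin lam, of x] lam by (simp add: divide_right_mono)
  also have "\<dots> = ((lam + ?S / ?d) / lam) ^ CARD('d)"
    by (simp add: power_divide)
  also have "(lam + ?S / ?d) / lam = 1 + ?S / (lam * ?d)"
    using lam by (simp add: field_simps)
  also have "(1 + ?S / (lam * ?d)) ^ CARD('d) \<le> (1 + real T * L\<^sup>2 / (lam * ?d)) ^ CARD('d)"
    using S_le lam by (intro power_mono add_left_mono divide_right_mono) (auto simp: sum_nonneg)
  finally show ?thesis .
qed

lemma gram_union_disjoint:
  "finite A \<Longrightarrow> finite B \<Longrightarrow> A \<inter> B = {} \<Longrightarrow> gram x (A \<union> B) = gram x A + gram x B"
  by (simp add: gram_def sum.union_disjoint)

lemma gram_UN_disjoint:
  assumes "finite I" "\<forall>j\<in>I. finite (U j)" "\<forall>j\<in>I. \<forall>k\<in>I. j \<noteq> k \<longrightarrow> U j \<inter> U k = {}"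
  shows "gram x (\<Union>j\<in>I. U j) = (\<Sum>j\<in>I. gram x (U j))"
  unfolding gram_def by (rule sum.UNION_disjoint[OF assms])

lemma data_incentive_eq_det_ratio:
  assumes "finite S" "finite (Vs i t)" "finite (Ws i t)" "\<forall>j\<in>S - {i}. finite (Us j t)"
    and "\<forall>j\<in>S - {i}. \<forall>k\<in>S - {i}. j \<noteq> k \<longrightarrow> Us j t \<inter> Us k t = {}"
    and "\<forall>j\<in>S - {i}. Us j t \<inter> Vs i t = {} \<and> Us j t \<inter> Ws i t = {}"
    and "Ws i t \<inter> Vs i t = {}"
  shows "data_incentive lam x Vs Us Ws t i S
    = det (reg_gram lam x (Vs i t \<union> ((\<Union>j\<in>S - {i}. Us j t) \<union> Ws i t)))
        / det (reg_gram lam x (Vs i t)) - 1"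
proof -
  let ?U = "\<Union>j\<in>S - {i}. Us j t"
  have "finite ?U"
    using assms(1,4) by blast
  moreover have "?U \<inter> Ws i t = {}"
    using assms(6) by blast
  moreover have "Vs i t \<inter> (?U \<union> Ws i t) = {}"
    using assms(6,7) by blast
  ultimately
  have "gram x (Vs i t \<union> (?U \<union> Ws i t)) = gram x (Vs i t) + (gram x ?U + gram x (Ws i t))"
    using assms(2,3) by (simp add: gram_union_disjoint)
  moreover have "gram x ?U = (\<Sum>j\<in>S - {i}. gram x (Us j t))"
    using assms by (simp add: gram_UN_disjoint)
  ultimately show ?thesis
    by (simp add: data_incentive_def reg_gram_def algebra_simps)
qed

lemma data_incentive_le:
  fixes x :: "nat \<Rightarrow> real^'d"
  assumes lam: "lam > 0" and bound: "\<forall>s\<in>{1..T}. norm (x s) \<le> L" and "t \<le> T" "finite S"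
    and V_range: "Vs i t \<subseteq> {1..t}" and W_range: "Ws i t \<subseteq> {1..t}"
    and U_range: "\<forall>j\<in>S - {i}. Us j t \<subseteq> {1..t}"
    and U_disj: "\<forall>j\<in>S - {i}. \<forall>k\<in>S - {i}. j \<noteq> k \<longrightarrow> Us j t \<inter> Us k t = {}"
    and UVW_disj: "\<forall>j\<in>S - {i}. Us j t \<inter> Vs i t = {} \<and> Us j t \<inter> Ws i t = {}"
    and WV_disj: "Ws i t \<inter> Vs i t = {}"
  shows "data_incentive lam x Vs Us Ws t i S
    \<le> min ((1 + L\<^sup>2 / lam) ^ T) ((1 + real T * L\<^sup>2 / (lam * real CARD('d))) ^ CARD('d))"
proof -
  define A where "A = (\<Union>j\<in>S - {i}. Us j t) \<union> Ws i t"
  have sub: "Vs i t \<union> A \<subseteq> {1..t}"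
    using V_range W_range U_range by (auto simp: A_def)
  then have fin: "finite (Vs i t)" "finite A"
    using finite_subset by auto
  have card: "card (Vs i t \<union> A) \<le> T"
    using card_mono[OF finite_atLeastAtMost sub] \<open>t \<le> T\<close> by simp
  then have card_A: "card A \<le> T"
    using card_mono[of "Vs i t \<union> A" A] fin by simp
  have bound_VA: "\<forall>s\<in>Vs i t \<union> A. norm (x s) \<le> L"
    using sub bound \<open>t \<le> T\<close> by auto
  have disj: "A \<inter> Vs i t = {}"
    using UVW_disj WV_disj by (auto simp: A_def)
  have "data_incentive lam x Vs Us Ws t i S
      = det (reg_gram lam x (Vs i t \<union> A)) / det (reg_gram lam x (Vs i t)) - 1"
    unfolding A_def
  proof (rule data_incentive_eq_det_ratio[where Vs = Vs and Us = Us and Ws = Ws and i = i and t = t])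
    show "finite (Ws i t)" "\<forall>j\<in>S - {i}. finite (Us j t)"
      using W_range U_range by (meson finite_subset finite_atLeastAtMost)+
  qed (fact \<open>finite S\<close> fin(1) U_disj UVW_disj WV_disj)+
  then show ?thesis
    using det_reg_gram_ratio_le_pow_card[OF lam fin disj _ card_A, of x L] bound_VA
      det_reg_gram_ratio_le_trace_pow[OF lam fin bound_VA card]
    by simp
qed

lemma pf_steps_subset: "(pf_step inc cost)\<^sup>*\<^sup>* C S \<Longrightarrow> S \<subseteq> C"
  by (induction rule: rtranclp_induct) (auto simp: pf_step_def)

lemma pf_outcome_excludes:
  assumes "pf_outcome inc cost C S" and "\<And>S'. S' \<subseteq> C \<Longrightarrow> inc i S' < cost i"
  shows "i \<notin> S"
proof
  assume "i \<in> S"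
  have "S \<subseteq> C"
    using assms(1) pf_steps_subset unfolding pf_outcome_def by blast
  then have "pf_step inc cost S (S - {i})"
    using assms(2) \<open>i \<in> S\<close> unfolding pf_step_def by blast
  then show False
    using assms(1) unfolding pf_outcome_def by blast
qed

theorem mainTheorem2:
  fixes x :: "nat \<Rightarrow> real^'d"
    and lam L :: real and T N :: nat
    and Vs Us Ws :: "nat \<Rightarrow> nat \<Rightarrow> nat set"
    and Dp :: "nat \<Rightarrow> real"
  assumes lam_pos: "lam > 0"
    and norm_bound: "\<forall>s\<in>{1..T}. norm (x s) \<le> L"
    and V_range: "\<forall>t\<le>T. \<forall>i<N. Vs i t \<subseteq> {1..t}"
    and U_range: "\<forall>t\<le>T. \<forall>j<N. Us j t \<subseteq> {1..t}"
    and W_range: "\<forall>t\<le>T. \<forall>i<N. Ws i t \<subseteq> {1..t}"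
    and U_disj: "\<forall>t\<le>T. \<forall>j<N. \<forall>k<N. j \<noteq> k \<longrightarrow> Us j t \<inter> Us k t = {}"
    and UV_disj: "\<forall>t\<le>T. \<forall>i<N. \<forall>j<N. j \<noteq> i \<longrightarrow> Us j t \<inter> Vs i t = {}"
    and UW_disj: "\<forall>t\<le>T. \<forall>i<N. \<forall>j<N. j \<noteq> i \<longrightarrow> Us j t \<inter> Ws i t = {}"
    and WV_disj: "\<forall>t\<le>T. \<forall>i<N. Ws i t \<inter> Vs i t = {}"
  shows "(\<forall>t\<le>T. \<forall>i<N. \<forall>S\<subseteq>{..<N}.
            data_incentive lam x Vs Us Ws t i S
              \<le> min ((1 + L\<^sup>2 / lam) ^ T) ((1 + real T * L\<^sup>2 / (lam * real CARD('d))) ^ CARD('d)))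
       \<and> (\<forall>t\<le>T. \<forall>i<N.
            Dp i > min ((1 + L\<^sup>2 / lam) ^ T) ((1 + real T * L\<^sup>2 / (lam * real CARD('d))) ^ CARD('d))
            \<longrightarrow> (\<forall>S. pf_outcome (data_incentive lam x Vs Us Ws t) Dp {..<N} S \<longrightarrow> i \<notin> S))"
proof -
  let ?bound = "min ((1 + L\<^sup>2 / lam) ^ T) ((1 + real T * L\<^sup>2 / (lam * real CARD('d))) ^ CARD('d))"
  have incentive_le: "data_incentive lam x Vs Us Ws t i S \<le> ?bound"
    if t: "t \<le> T" and i: "i < N" and S: "S \<subseteq> {..<N}" for t i S
  proof (rule data_incentive_le[OF lam_pos norm_bound t])
    have others: "j < N \<and> j \<noteq> i" if "j \<in> S - {i}" for j
      using that S by auto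
    show "finite S"
      using S finite_subset by blast
    show "Vs i t \<subseteq> {1..t}" "Ws i t \<subseteq> {1..t}" "Ws i t \<inter> Vs i t = {}"
      using V_range W_range WV_disj t i by simp_all
    show "\<forall>j\<in>S - {i}. Us j t \<subseteq> {1..t}"
      using U_range t others by simp
    show "\<forall>j\<in>S - {i}. \<forall>k\<in>S - {i}. j \<noteq> k \<longrightarrow> Us j t \<inter> Us k t = {}"
      using U_disj t others by simp
    show "\<forall>j\<in>S - {i}. Us j t \<inter> Vs i t = {} \<and> Us j t \<inter> Ws i t = {}"
      using UV_disj UW_disj t i others by simp
  qed
  have "i \<notin> S"
    if "t \<le> T" "i < N" "Dp i > ?bound" "pf_outcome (data_incentive lam x Vs Us Ws t) Dp {..<N} S"
    for t i S
    using that(4)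
  proof (rule pf_outcome_excludes)
    show "data_incentive lam x Vs Us Ws t i S' < Dp i" if "S' \<subseteq> {..<N}" for S'
      using incentive_le[OF \<open>t \<le> T\<close> \<open>i < N\<close> that] \<open>Dp i > ?bound\<close> by linarith
  qed
  with incentive_le show ?thesis
    by blast
qed

end
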